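(* Let $B\in\mathbb{F}_q[T]$ be such that $y^2=x^3+B$ is a minimal Weierstrass equation of an elliptic curve over $\mathbb{F}_q(T)$. Then for $n\ge1$, $$\frac1{|\mathcal{F}_N(B)|}\sum_{D\in\mathcal{F}_N(B)}n\sum_{d\mid n}\deg(D_{n/d})\ll n\tau(n),$$ where $\tau$ is the divisor function.
   Context: Fix a prime $p\neq2,3$ and $q=p^r$ with $q\equiv1\pmod6$; primes are monic irreducible polynomials in $\mathbb{F}_q[T]$. $\mathcal{F}_N(B)$ is the set of monic cube-free $D\in\mathbb{F}_q[T]$ with $\gcd(D,B)=1$, $\deg(\mathrm{rad}\,D)=N$ and $\deg D\equiv0\pmod3$. For $D\in\mathbb{F}_q[T]$ and $k>0$, $D_k=\prod_{P\mid D,\ \deg P=k}P$ (and $D_k=1$ if $k$ is not a positive integer, i.e. the corresponding term is $0$). The implied constant may depend on $B$. *)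

theory Defs
  imports "HOL-Computational_Algebra.Computational_Algebra" "HOL-Library.Cardinality"
begin

text \<open>Primes of F_q[T] are the monic irreducible polynomials, i.e. the elements
  with prime P in the normalized factorial ring 'a poly (normalize = make monic).\<close>

definition cube_free :: "'a::{field_gcd,finite} poly \<Rightarrow> bool" where
  "cube_free D \<longleftrightarrow> (\<forall>P. prime P \<longrightarrow> \<not> P ^ 3 dvd D)"

definition rad_poly :: "'a::{field_gcd,finite} poly \<Rightarrow> 'a poly" where
  "rad_poly D = (\<Prod>P\<in>prime_factors D. P)"

definition Dk :: "'a::{field_gcd,finite} poly \<Rightarrow> nat \<Rightarrow> 'a poly" where
  "Dk D k = (\<Prod>P\<in>{P \<in> prime_factors D. degree P = k}. P)"

definition FN :: "'a::{field_gcd,finite} poly \<Rightarrow> nat \<Rightarrow> 'a poly set" where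
  "FN B N = {D. lead_coeff D = 1 \<and> cube_free D \<and> coprime D B \<and>
                degree (rad_poly D) = N \<and> degree D mod 3 = 0}"

text \<open>y^2 = x^3 + B (B in F_q[T]) is a minimal Weierstrass equation of an elliptic curve:
  Delta = -432 B^2 nonzero and, since c4 = 0 and char not 2,3, minimality at every prime P
  means v_P(Delta) < 12, i.e. v_P(B) < 6.\<close>
definition minimal_weierstrass_j0 :: "'a::{field_gcd,finite} poly \<Rightarrow> bool" where
  "minimal_weierstrass_j0 B \<longleftrightarrow> B \<noteq> 0 \<and> (\<forall>P. prime P \<longrightarrow> \<not> P ^ 6 dvd B)"

definition tau :: "nat \<Rightarrow> nat" where
  "tau n = card {d. d dvd n}"

end

theory Submission
  imports Defs
begin

text \<open>If \<open>D \<in> F_N(B)\<close> then \<open>D = A * C\<^sup>2\<close> with \<open>A * C = rad D\<close> of degree \<open>N\<close>, so a prime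
  \<open>P\<close> divides at most \<open>2 (N + 1) q\<^sup>N / q\<^bsup>deg P\<^esup>\<close> of them; since at most \<open>q\<^sup>k / k\<close> primes have
  degree \<open>k\<close>, the total \<open>\<Sum>\<^sub>D deg D\<^sub>k\<close> is at most \<open>2 (N + 1) q\<^sup>N\<close>. Conversely
  \<open>|F_N(B)| \<ge> c\<^sub>B (N + 1) q\<^sup>N\<close>: taking \<open>A = Q\<^sub>1 B + 1\<close>, \<open>C = Q\<^sub>2 B + 1\<close>, a sieve over small
  primes shows that for \<open>q \<ge> 7\<close> at least a quarter of all pairs of monic \<open>Q\<^sub>1, Q\<^sub>2\<close> of given
  degrees make \<open>A, C\<close> squarefree and coprime, and about \<open>N / 3\<close> splittings of the degree satisfy
  \<open>3 | deg D\<close>. So the average of \<open>deg D\<^sub>k\<close> is bounded uniformly in \<open>k\<close> and \<open>N\<close>, and the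
  sum over the divisors of \<open>n\<close> contributes the factor \<open>\<tau>(n)\<close>.\<close>

section \<open>Counting monic polynomials\<close>

definition polys_degree_less :: "nat \<Rightarrow> 'a::zero poly set" where
  "polys_degree_less n = {p. \<forall>i\<ge>n. coeff p i = 0}"

definition monic_polys :: "nat \<Rightarrow> 'a::{zero,one} poly set" where
  "monic_polys n = {F. lead_coeff F = 1 \<and> degree F = n}"

lemma bij_betw_polys_degree_less_lists:
  "bij_betw (\<lambda>p. map (coeff p) [0..<n]) (polys_degree_less n) {xs :: 'a::zero list. length xs = n}"
proof (rule bij_betw_byWitness[where f' = Poly])
  show "\<forall>p\<in>polys_degree_less n. Poly (map (coeff p) [0..<n]) = p"
    by (auto simp: polys_degree_less_def nth_default_def intro!: poly_eqI)
  show "\<forall>xs\<in>{xs. length xs = n}. map (coeff (Poly xs)) [0..<n] = xs"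
    by (auto simp: nth_default_def intro: nth_equalityI)
qed (auto simp: polys_degree_less_def nth_default_def)

lemma finite_polys_degree_less [simp]: "finite (polys_degree_less n :: 'a::{zero,finite} poly set)"
  using bij_betw_finite[OF bij_betw_polys_degree_less_lists[where 'a='a]] finite_lists_length_eq[of "UNIV :: 'a set" n]
  by simp

lemma card_polys_degree_less: "card (polys_degree_less n :: 'a::{zero,finite} poly set) = CARD('a) ^ n"
  using bij_betw_same_card[OF bij_betw_polys_degree_less_lists[where 'a='a]] card_lists_length_eq[of "UNIV :: 'a set" n]
  by simp

lemma bij_betw_polys_degree_less_monic_polys:
  "bij_betw (\<lambda>p. monom 1 n + p) (polys_degree_less n) (monic_polys n :: 'a::ring_1 poly set)"
proof (rule bij_betw_byWitness[where f' = "\<lambda>F. F - monom 1 n"])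
  show "(\<lambda>p. monom 1 n + p) ` polys_degree_less n \<subseteq> (monic_polys n :: 'a poly set)"
  proof clarify
    fix p :: "'a poly" assume "p \<in> polys_degree_less n"
    then have top: "coeff (monom 1 n + p) n = 1" and above: "\<forall>i>n. coeff (monom 1 n + p) i = 0"
      by (simp_all add: polys_degree_less_def)
    then have "degree (monom 1 n + p) = n"
      by (metis degree_le le_antisym le_degree one_neq_zero)
    with top show "monom 1 n + p \<in> monic_polys n" by (simp add: monic_polys_def)
  qed
  show "(\<lambda>F. F - monom 1 n) ` monic_polys n \<subseteq> (polys_degree_less n :: 'a poly set)"
    by (auto simp: monic_polys_def polys_degree_less_def coeff_eq_0 le_less)
qed simp_all

lemma finite_monic_polys [simp]: "finite (monic_polys n :: 'a::{ring_1,finite} poly set)"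
  using bij_betw_finite[OF bij_betw_polys_degree_less_monic_polys[where 'a='a]] by simp

lemma card_monic_polys: "card (monic_polys n :: 'a::{ring_1,finite} poly set) = CARD('a) ^ n"
  using bij_betw_same_card[OF bij_betw_polys_degree_less_monic_polys[where 'a='a]] card_polys_degree_less
  by metis

lemma monic_polys_nonzero: "(F :: 'a::zero_neq_one poly) \<in> monic_polys n \<Longrightarrow> F \<noteq> 0"
  by (auto simp: monic_polys_def)

lemma mult_mem_monic_polys:
  fixes F G :: "'a::{comm_semiring_1,semiring_no_zero_divisors} poly"
  assumes "F \<in> monic_polys m" "G \<in> monic_polys n"
  shows "F * G \<in> monic_polys (m + n)"
  using assms monic_polys_nonzero[OF assms(1)] monic_polys_nonzero[OF assms(2)]
  by (auto simp: monic_polys_def degree_mult_eq coeff_mult_degree_sum)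

lemma mem_polys_degree_less_iff: "p \<in> polys_degree_less n \<longleftrightarrow> p = 0 \<or> degree p < n"
  by (auto simp: polys_degree_less_def coeff_eq_0) (metis leading_coeff_0_iff not_less)

lemma diff_mem_polys_degree_less:
  fixes F G :: "'a::ring_1 poly"
  assumes "F \<in> monic_polys n" "G \<in> monic_polys n"
  shows "F - G \<in> polys_degree_less n"
  using assms by (auto simp: polys_degree_less_def monic_polys_def coeff_eq_0 le_less)

lemma monic_multiples_eq_image:
  fixes G :: "'a::field poly"
  assumes G: "lead_coeff G = 1" "degree G \<le> n"
  shows "{F \<in> monic_polys n. G dvd F} = (\<lambda>H. G * H) ` monic_polys (n - degree G)"
proof (intro equalityI subsetI)
  fix F assume "F \<in> {F \<in> monic_polys n. G dvd F}"
  then obtain H where F: "F \<in> monic_polys n" and FGH: "F = G * H" by auto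
  then have "H \<noteq> 0" by (auto simp: monic_polys_def)
  moreover have "G \<noteq> 0" using G by auto
  ultimately have "H \<in> monic_polys (n - degree G)" using F FGH G
    by (auto simp: monic_polys_def coeff_mult_degree_sum degree_mult_eq)
  with FGH show "F \<in> (\<lambda>H. G * H) ` monic_polys (n - degree G)" by blast
next
  fix F assume "F \<in> (\<lambda>H. G * H) ` monic_polys (n - degree G)"
  then obtain H where H: "H \<in> monic_polys (n - degree G)" and FGH: "F = G * H" by auto
  have "G \<in> monic_polys (degree G)" using G by (simp add: monic_polys_def)
  from mult_mem_monic_polys[OF this H] G FGH have "F \<in> monic_polys n" by simp
  with FGH show "F \<in> {F \<in> monic_polys n. G dvd F}" by simp
qed

lemma card_monic_multiples:
  fixes G :: "'a::{field,finite} poly"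
  assumes G: "lead_coeff G = 1"
  shows "card {F \<in> monic_polys n. G dvd F} = (if degree G \<le> n then CARD('a) ^ (n - degree G) else 0)"
proof (cases "degree G \<le> n")
  case True
  have "G \<noteq> 0" using G by auto
  then have "inj_on (\<lambda>H. G * H) (monic_polys (n - degree G))"
    by (auto intro: inj_onI)
  with True show ?thesis
    by (simp add: monic_multiples_eq_image[OF G True] card_image card_monic_polys)
next
  case False
  have "degree G \<le> n" if "F \<in> monic_polys n" "G dvd F" for F
    using that dvd_imp_degree_le[of G F] monic_polys_nonzero[OF that(1)] by (auto simp: monic_polys_def)
  with False show ?thesis by auto
qed

lemma card_monic_multiples_le:
  fixes G :: "'a::{field,finite} poly"
  assumes "lead_coeff G = 1"
  shows "real (card {F \<in> monic_polys n. G dvd F}) \<le> real CARD('a) ^ n / real CARD('a) ^ degree G"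
proof (cases "degree G \<le> n")
  case True
  then have "real CARD('a) ^ n = real CARD('a) ^ (n - degree G) * real CARD('a) ^ degree G"
    by (simp flip: power_add)
  with True show ?thesis by (simp add: card_monic_multiples[OF assms])
qed (simp add: card_monic_multiples[OF assms])

lemma coprime_mult_plus_one:
  fixes B B' Q :: "'a::{algebraic_semidom,comm_ring_1}"
  assumes "B dvd B'"
  shows "coprime (Q * B' + 1) B"
proof (rule coprimeI)
  fix d assume "d dvd Q * B' + 1" "d dvd B"
  moreover from \<open>d dvd B\<close> assms have "d dvd Q * B'" by (auto intro: dvd_trans)
  ultimately show "is_unit d" by (simp add: dvd_add_right_iff)
qed

text \<open>Any two solutions of \<open>M dvd Q * B + 1\<close> differ by a multiple of \<open>M\<close>, because such an
  \<open>M\<close> is coprime to \<open>B\<close>.\<close>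

lemma card_monic_dvd_mult_plus_one_le:
  fixes M B :: "'a::{field_gcd,finite} poly"
  assumes M: "M \<noteq> 0"
  shows "card {Q \<in> monic_polys m. M dvd Q * B + 1} \<le> CARD('a) ^ (m - degree M)"
proof (cases "{Q \<in> monic_polys m. M dvd Q * B + 1} = {}")
  case False
  then obtain Q1 where Q1: "Q1 \<in> monic_polys m" "M dvd Q1 * B + 1" by auto
  have "coprime M B"
    using coprime_divisors[OF Q1(2) dvd_refl coprime_mult_plus_one[OF dvd_refl]] .
  have "{Q \<in> monic_polys m. M dvd Q * B + 1} \<subseteq> (\<lambda>H. Q1 + M * H) ` polys_degree_less (m - degree M)"
  proof clarify
    fix Q assume Q: "Q \<in> monic_polys m" "M dvd Q * B + 1"
    have "M dvd (Q * B + 1) - (Q1 * B + 1)" using Q Q1 by (intro dvd_diff)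
    then have "M dvd (Q - Q1) * B" by (simp add: algebra_simps)
    with \<open>coprime M B\<close> have "M dvd Q - Q1" by (simp add: coprime_dvd_mult_left_iff)
    then obtain H where H: "Q - Q1 = M * H" by blast
    have "M * H \<in> polys_degree_less m" using diff_mem_polys_degree_less[OF Q(1) Q1(1)] H by simp
    with M have "H \<in> polys_degree_less (m - degree M)"
      by (cases "H = 0") (auto simp: mem_polys_degree_less_iff degree_mult_eq)
    with H show "Q \<in> (\<lambda>H. Q1 + M * H) ` polys_degree_less (m - degree M)"
      by (intro image_eqI[of _ _ H]) (simp_all add: algebra_simps flip: H)
  qed
  then have "card {Q \<in> monic_polys m. M dvd Q * B + 1}
      \<le> card ((\<lambda>H. Q1 + M * H) ` polys_degree_less (m - degree M))"
    by (intro card_mono) auto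
  also have "\<dots> \<le> card (polys_degree_less (m - degree M) :: 'a poly set)"
    by (rule card_image_le) simp
  finally show ?thesis by (simp add: card_polys_degree_less)
qed (simp only: card.empty zero_le)

section \<open>Irreducible polynomials of given degree\<close>

lemma normalize_monic_poly: "lead_coeff (F :: 'a::field_gcd poly) = 1 \<Longrightarrow> normalize F = F"
  by (simp add: unit_factor_1_imp_normalized unit_factor_poly_def)

lemma prime_poly_monic: "prime (P :: 'a::field_gcd poly) \<Longrightarrow> lead_coeff P = 1"
proof -
  assume P: "prime P"
  then have "P \<noteq> 0" by auto
  from P have "unit_factor P = 1"
    using unit_factor_normalize[OF \<open>P \<noteq> 0\<close>] by simp
  then show ?thesis
    using \<open>P \<noteq> 0\<close> by (simp add: unit_factor_poly_def one_pCons dvd_field_iff is_unit_unit_factor)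
qed

lemma prime_poly_degree_pos: "prime (P :: 'a::field_gcd poly) \<Longrightarrow> 0 < degree P"
  by (metis is_unit_iff_degree not_prime_0 not_prime_unit gr0I)

definition primes_of_degree :: "nat \<Rightarrow> 'a::field_gcd poly set" where
  "primes_of_degree d = {P. prime P \<and> degree P = d}"

definition primes_degree_le :: "nat \<Rightarrow> 'a::field_gcd poly set" where
  "primes_degree_le d = {P. prime P \<and> degree P \<le> d}"

lemma primes_of_degree_subset_monic_polys: "primes_of_degree d \<subseteq> monic_polys d"
  by (auto simp: primes_of_degree_def monic_polys_def prime_poly_monic)

lemma finite_primes_of_degree [simp]: "finite (primes_of_degree d :: 'a::{field_gcd,finite} poly set)"
  using primes_of_degree_subset_monic_polys finite_monic_polys by (rule finite_subset)

lemma card_primes_of_degree_le: "card (primes_of_degree d :: 'a::{field_gcd,finite} poly set) \<le> CARD('a) ^ d"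
  using card_mono[OF finite_monic_polys primes_of_degree_subset_monic_polys] card_monic_polys by metis

lemma primes_degree_le_eq_UN: "primes_degree_le m = (\<Union>d\<in>{1..m}. primes_of_degree d)"
  using prime_poly_degree_pos by (fastforce simp: primes_degree_le_def primes_of_degree_def)

lemma finite_primes_degree_le [simp]: "finite (primes_degree_le m :: 'a::{field_gcd,finite} poly set)"
  by (simp add: primes_degree_le_eq_UN)

lemma sum_primes_degree_le:
  "(\<Sum>P\<in>(primes_degree_le m :: 'a::{field_gcd,finite} poly set). g (degree P))
    = (\<Sum>d=1..m. of_nat (card (primes_of_degree d :: 'a poly set)) * g d)"
proof -
  have "(\<Sum>P\<in>(primes_degree_le m :: 'a poly set). g (degree P))
      = (\<Sum>d=1..m. \<Sum>P\<in>(primes_of_degree d :: 'a poly set). g (degree P))"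
    unfolding primes_degree_le_eq_UN
    by (rule sum.UNION_disjoint) (auto simp: primes_of_degree_def[symmetric], auto simp: primes_of_degree_def)
  then show ?thesis by (simp add: primes_of_degree_def)
qed

lemma sum_primes_degree_le_le_sum_powers:
  fixes g :: "nat \<Rightarrow> real"
  assumes "\<And>d. 0 \<le> g d"
  shows "(\<Sum>P\<in>(primes_degree_le m :: 'a::{field_gcd,finite} poly set). g (degree P))
    \<le> (\<Sum>d=1..m. real CARD('a) ^ d * g d)"
  unfolding sum_primes_degree_le
  using card_primes_of_degree_le assms by (intro sum_mono mult_right_mono) (auto simp flip: of_nat_power)

lemma degree_eq_sum_multiplicity:
  fixes F :: "'a::field_gcd poly"
  assumes "lead_coeff F = 1"
  shows "degree F = (\<Sum>P\<in>prime_factors F. multiplicity P F * degree P)"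
proof -
  have "F \<noteq> 0" using assms by auto
  have "F = (\<Prod>P\<in>prime_factors F. P ^ multiplicity P F)"
    using prod_prime_factors[OF \<open>F \<noteq> 0\<close>] normalize_monic_poly[OF assms] by simp
  also have "degree \<dots> = (\<Sum>P\<in>prime_factors F. multiplicity P F * degree P)"
    by (subst degree_prod_sum_eq) (auto intro!: sum.cong simp: degree_power_eq in_prime_factors_iff)
  finally show ?thesis .
qed

lemma card_prime_power_dvd_exponents:
  fixes F P :: "'a::field_gcd poly"
  assumes P: "prime P" and F: "F \<in> monic_polys n" and "n \<le> m"
  shows "card {j \<in> {1..m}. P ^ j dvd F} = multiplicity P F"
proof -
  have "F \<noteq> 0" using F by (rule monic_polys_nonzero)
  have "multiplicity P F * degree P = degree (P ^ multiplicity P F)"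
    using P by (simp add: degree_power_eq)
  also have "\<dots> \<le> n"
    using dvd_imp_degree_le[OF multiplicity_dvd \<open>F \<noteq> 0\<close>] F by (simp add: monic_polys_def)
  moreover have "multiplicity P F \<le> multiplicity P F * degree P"
    using prime_poly_degree_pos[OF P] by simp
  ultimately have "multiplicity P F \<le> m" using \<open>n \<le> m\<close> by linarith
  then have "{j \<in> {1..m}. P ^ j dvd F} = {1..multiplicity P F}"
    using power_dvd_iff_le_multiplicity[OF \<open>F \<noteq> 0\<close>] P by auto
  then show ?thesis by simp
qed

lemma degree_eq_sum_prime_power_dvd:
  fixes F :: "'a::{field_gcd,finite} poly"
  assumes F: "F \<in> monic_polys n" and "n \<le> m"
  shows "degree F = (\<Sum>P\<in>primes_degree_le m. \<Sum>j=1..m. if P ^ j dvd F then degree P else 0)"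
proof -
  have "F \<noteq> 0" using F by (rule monic_polys_nonzero)
  have "degree F = (\<Sum>P\<in>prime_factors F. multiplicity P F * degree P)"
    using F unfolding monic_polys_def by (blast intro: degree_eq_sum_multiplicity)
  also have "\<dots> = (\<Sum>P\<in>primes_degree_le m. multiplicity P F * degree P)"
  proof (rule sum.mono_neutral_left)
    show "prime_factors F \<subseteq> primes_degree_le m"
      using dvd_imp_degree_le[OF _ \<open>F \<noteq> 0\<close>] F \<open>n \<le> m\<close>
      by (fastforce simp: primes_degree_le_def monic_polys_def in_prime_factors_iff)
    show "\<forall>P\<in>primes_degree_le m - prime_factors F. multiplicity P F * degree P = 0"
      using \<open>F \<noteq> 0\<close> by (auto simp: primes_degree_le_def in_prime_factors_iff not_dvd_imp_multiplicity_0)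
  qed simp
  also have "\<dots> = (\<Sum>P\<in>primes_degree_le m. \<Sum>j=1..m. if P ^ j dvd F then degree P else 0)"
  proof (rule sum.cong[OF refl])
    fix P :: "'a poly" assume "P \<in> primes_degree_le m"
    then have "prime P" by (simp add: primes_degree_le_def)
    have "(\<Sum>j=1..m. if P ^ j dvd F then degree P else 0) = (\<Sum>j\<in>{j \<in> {1..m}. P ^ j dvd F}. degree P)"
      by (rule sum.inter_filter[symmetric]) simp
    also have "\<dots> = multiplicity P F * degree P"
      using card_prime_power_dvd_exponents[OF \<open>prime P\<close> F \<open>n \<le> m\<close>] by simp
    finally show "multiplicity P F * degree P = (\<Sum>j=1..m. if P ^ j dvd F then degree P else 0)" ..
  qed
  finally show ?thesis .
qed

lemma total_degree_monic_polys_eq: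
  assumes "n \<le> m"
  shows "n * CARD('a) ^ n = (\<Sum>P\<in>(primes_degree_le m :: 'a::{field_gcd,finite} poly set).
           \<Sum>j=1..m. degree P * card {F \<in> monic_polys n. P ^ j dvd F})"
proof -
  have "n * CARD('a) ^ n = (\<Sum>F\<in>(monic_polys n :: 'a poly set). degree F)"
    by (simp add: monic_polys_def card_monic_polys[unfolded monic_polys_def])
  also have "\<dots> = (\<Sum>F\<in>(monic_polys n :: 'a poly set). \<Sum>P\<in>primes_degree_le m. \<Sum>j=1..m. if P ^ j dvd F then degree P else 0)"
  proof (rule sum.cong[OF refl])
    fix F :: "'a poly" assume "F \<in> monic_polys n"
    then show "degree F = (\<Sum>P\<in>primes_degree_le m. \<Sum>j=1..m. if P ^ j dvd F then degree P else 0)"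
      using assms by (rule degree_eq_sum_prime_power_dvd)
  qed
  also have "\<dots> = (\<Sum>P\<in>(primes_degree_le m :: 'a poly set). \<Sum>j=1..m. \<Sum>F\<in>monic_polys n.
      if P ^ j dvd F then degree P else 0)"
    by (simp only: sum.swap[of _ "monic_polys n"])
  also have "\<dots> = (\<Sum>P\<in>(primes_degree_le m :: 'a poly set). \<Sum>j=1..m. degree P * card {F \<in> monic_polys n. P ^ j dvd F})"
    by (simp add: sum.If_cases Int_def mult.commute)
  finally show ?thesis .
qed

lemma card_monic_multiples_Suc:
  fixes G :: "'a::{field,finite} poly"
  assumes "lead_coeff G = 1" "0 < degree G"
  shows "card {F \<in> monic_polys (Suc n). G dvd F}
    = (if degree G = Suc n then 1 else 0) + CARD('a) * card {F \<in> monic_polys n. G dvd F}"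
  using assms by (auto simp: card_monic_multiples Suc_diff_le)

text \<open>Comparing the counts in degrees \<open>n\<close> and \<open>n - 1\<close> isolates the prime powers of degree exactly
  \<open>n\<close>: their degrees add up to \<open>q ^ n\<close>.\<close>

lemma degree_times_card_primes_of_degree_le:
  "n * card (primes_of_degree n :: 'a::{field_gcd,finite} poly set) \<le> CARD('a) ^ n"
proof (cases n)
  case (Suc k)
  let ?q = "CARD('a)" and ?Pl = "primes_degree_le n :: 'a poly set"
  define W where "W n' = (\<Sum>P\<in>?Pl. \<Sum>j=1..n. degree P * card {F \<in> monic_polys n'. P ^ j dvd F})" for n'
  define E where "E = (\<Sum>P\<in>?Pl. \<Sum>j=1..n. degree P * (if degree (P ^ j) = n then 1 else 0))"
  have "W n = E + ?q * W k"
  proof -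
    have "degree P * card {F \<in> monic_polys n. P ^ j dvd F}
        = degree P * (if degree (P ^ j) = n then 1 else 0) + ?q * (degree P * card {F \<in> monic_polys k. P ^ j dvd F})"
      if "P \<in> ?Pl" "j \<in> {1..n}" for P j
    proof -
      have "prime P" using that by (simp add: primes_degree_le_def)
      then have "lead_coeff (P ^ j) = 1"
        by (simp add: lead_coeff_power prime_poly_monic)
      moreover have "0 < degree (P ^ j)"
        using that prime_poly_degree_pos[OF \<open>prime P\<close>] not_prime_0 \<open>prime P\<close>
        by (auto simp: degree_power_eq)
      ultimately show ?thesis using card_monic_multiples_Suc[of "P ^ j" k]
        by (simp add: Suc algebra_simps)
    qed
    then have "W n = (\<Sum>P\<in>?Pl. \<Sum>j=1..n. degree P * (if degree (P ^ j) = n then 1 else 0)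
        + ?q * (degree P * card {F \<in> monic_polys k. P ^ j dvd F}))"
      unfolding W_def by (intro sum.cong refl) simp
    then show ?thesis
      by (simp add: W_def E_def sum.distrib sum_distrib_left)
  qed
  moreover have "W n = n * ?q ^ n" "W k = k * ?q ^ k"
    using total_degree_monic_polys_eq[of n n, where 'a='a] total_degree_monic_polys_eq[of k n, where 'a='a] Suc
    by (simp_all add: W_def)
  ultimately have "E = ?q ^ n" by (simp add: Suc)
  have "n * card (primes_of_degree n :: 'a poly set)
      = (\<Sum>P\<in>(primes_of_degree n :: 'a poly set). \<Sum>j\<in>{1}. degree P * (if degree (P ^ j) = n then 1 else 0))"
    by (simp add: primes_of_degree_def)
  also have "\<dots> \<le> (\<Sum>P\<in>(primes_of_degree n :: 'a poly set). \<Sum>j=1..n. degree P * (if degree (P ^ j) = n then 1 else 0))"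
    by (rule sum_mono, rule sum_mono2) (use Suc in auto)
  also have "\<dots> \<le> E"
    unfolding E_def by (intro sum_mono2 finite_primes_degree_le) (auto simp: primes_of_degree_def primes_degree_le_def)
  finally show ?thesis using \<open>E = ?q ^ n\<close> by simp
qed simp

section \<open>Cube-free polynomials and their radical\<close>

lemma multiplicity_rad_poly:
  fixes D P :: "'a::{field_gcd,finite} poly"
  assumes "prime P"
  shows "multiplicity P (rad_poly D) = (if P \<in> prime_factors D then 1 else 0)"
proof -
  have "multiplicity P (\<Prod>Q\<in>prime_factors D. Q ^ (\<lambda>_. 1::nat) Q) = (if P \<in> prime_factors D then 1 else 0)"
    using assms by (intro multiplicity_prod_prime_powers) auto
  then show ?thesis by (simp add: rad_poly_def)
qed

lemma rad_poly_nonzero: "rad_poly (D :: 'a::{field_gcd,finite} poly) \<noteq> 0"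
  by (auto simp: rad_poly_def)

lemma rad_poly_monic: "lead_coeff (rad_poly (D :: 'a::{field_gcd,finite} poly)) = 1"
  unfolding rad_poly_def lead_coeff_prod by (rule prod.neutral) (auto intro: prime_poly_monic)

lemma degree_rad_poly: "degree (rad_poly (D :: 'a::{field_gcd,finite} poly)) = (\<Sum>P\<in>prime_factors D. degree P)"
  unfolding rad_poly_def by (rule degree_prod_sum_eq) auto

lemma rad_poly_dvd:
  fixes D :: "'a::{field_gcd,finite} poly"
  assumes "D \<noteq> 0"
  shows "rad_poly D dvd D"
proof (rule multiplicity_le_imp_dvd[OF rad_poly_nonzero])
  fix P :: "'a poly" assume "prime P"
  with assms show "multiplicity P (rad_poly D) \<le> multiplicity P D"
    by (auto simp: multiplicity_rad_poly Suc_le_eq prime_multiplicity_gt_zero_iff)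
qed

lemma multiplicity_cube_free_less:
  fixes D P :: "'a::{field_gcd,finite} poly"
  assumes "D \<noteq> 0" "cube_free D" "prime P"
  shows "multiplicity P D < 3"
  using assms by (intro multiplicity_lessI) (auto simp: cube_free_def)

lemma cube_free_div_rad_poly_dvd:
  fixes D :: "'a::{field_gcd,finite} poly"
  assumes D: "D \<noteq> 0" "cube_free D"
  shows "D div rad_poly D dvd rad_poly D"
proof -
  define E where "E = D div rad_poly D"
  have DE: "D = rad_poly D * E" using rad_poly_dvd[OF D(1)] by (simp add: E_def)
  with D have "E \<noteq> 0" by auto
  have "multiplicity P E \<le> multiplicity P (rad_poly D)" if "prime P" for P
  proof -
    have "multiplicity P (rad_poly D * E) = multiplicity P (rad_poly D) + multiplicity P E"
      using \<open>E \<noteq> 0\<close> rad_poly_nonzero that by (intro prime_elem_multiplicity_mult_distrib) auto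
    then have "multiplicity P D = multiplicity P (rad_poly D) + multiplicity P E"
      using DE by simp
    moreover have "P \<in> prime_factors D" if "multiplicity P D \<noteq> 0"
      using that \<open>prime P\<close> D(1) by (auto simp: in_prime_factors_iff prime_multiplicity_gt_zero_iff)
    ultimately show ?thesis
      using multiplicity_cube_free_less[OF D \<open>prime P\<close>] that by (auto simp: multiplicity_rad_poly)
  qed
  then show ?thesis unfolding E_def[symmetric] by (rule multiplicity_le_imp_dvd[OF \<open>E \<noteq> 0\<close>])
qed

definition monic_pairs :: "nat \<Rightarrow> ('a::{zero,one} poly \<times> 'a poly) set" where
  "monic_pairs N = (\<Union>a\<le>N. monic_polys a \<times> monic_polys (N - a))"

lemma finite_monic_pairs [simp]: "finite (monic_pairs N :: ('a::{ring_1,finite} poly \<times> 'a poly) set)"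
  by (simp add: monic_pairs_def)

lemma FN_elem_decompose:
  fixes B :: "'a::{field_gcd,finite} poly"
  assumes "D \<in> FN B N"
  obtains A C where "(A, C) \<in> monic_pairs N" "D = A * C\<^sup>2" "A * C = rad_poly D"
proof -
  have D: "lead_coeff D = 1" "cube_free D" "degree (rad_poly D) = N"
    using assms by (auto simp: FN_def)
  then have "D \<noteq> 0" by auto
  define C where "C = D div rad_poly D"
  define A where "A = rad_poly D div C"
  have DC: "D = rad_poly D * C" using rad_poly_dvd[OF \<open>D \<noteq> 0\<close>] by (simp add: C_def)
  have RA: "rad_poly D = A * C"
    using cube_free_div_rad_poly_dvd[OF \<open>D \<noteq> 0\<close> D(2)] by (simp add: A_def C_def)
  have "A \<noteq> 0" "C \<noteq> 0" using RA rad_poly_nonzero[of D] by auto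
  have "lead_coeff C = 1" using DC D(1) rad_poly_monic by (metis lead_coeff_mult mult_1)
  moreover have "lead_coeff A = 1" using RA rad_poly_monic \<open>lead_coeff C = 1\<close> by (metis lead_coeff_mult mult.right_neutral)
  moreover have "degree A + degree C = N" using RA D(3) \<open>A \<noteq> 0\<close> \<open>C \<noteq> 0\<close> by (simp add: degree_mult_eq)
  ultimately have "(A, C) \<in> monic_pairs N"
    by (force simp: monic_pairs_def monic_polys_def)
  moreover have "D = A * C\<^sup>2" using DC RA by (simp add: power2_eq_square mult.assoc)
  ultimately show ?thesis using that RA by auto
qed

lemma finite_FN [simp]: "finite (FN (B :: 'a::{field_gcd,finite} poly) N)"
proof (rule finite_subset)
  show "FN B N \<subseteq> (\<lambda>(A, C). A * C\<^sup>2) ` monic_pairs N"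
    by (force elim: FN_elem_decompose)
qed simp

section \<open>Upper bound for the total degree of \<open>D\<^sub>k\<close>\<close>

lemma card_monic_pairs_dvd_le:
  fixes P :: "'a::{field,finite} poly"
  assumes P: "lead_coeff P = 1"
  shows "real (card {(A, C) \<in> monic_pairs N. P dvd A \<or> P dvd C})
    \<le> 2 * (real N + 1) * real CARD('a) ^ N / real CARD('a) ^ degree P"
proof -
  let ?q = "real CARD('a)" and ?M = "\<lambda>a. {A \<in> monic_polys a :: 'a poly set. P dvd A}"
  have "{(A, C) \<in> monic_pairs N. P dvd A \<or> P dvd C}
      = (\<Union>a\<le>N. ?M a \<times> monic_polys (N - a) \<union> monic_polys a \<times> ?M (N - a))"
    by (auto simp: monic_pairs_def)
  then have "card {(A, C) \<in> monic_pairs N. P dvd A \<or> P dvd C}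
      \<le> (\<Sum>a\<le>N. card (?M a \<times> monic_polys (N - a) \<union> monic_polys a \<times> ?M (N - a)))"
    by (simp add: card_UN_le)
  also have "\<dots> \<le> (\<Sum>a\<le>N. card (?M a) * CARD('a) ^ (N - a) + CARD('a) ^ a * card (?M (N - a)))"
    by (intro sum_mono order_trans[OF card_Un_le]) (simp add: card_cartesian_product card_monic_polys)
  finally have "real (card {(A, C) \<in> monic_pairs N. P dvd A \<or> P dvd C})
      \<le> real (\<Sum>a\<le>N. card (?M a) * CARD('a) ^ (N - a) + CARD('a) ^ a * card (?M (N - a)))"
    by (rule of_nat_mono)
  also have "\<dots> = (\<Sum>a\<le>N. real (card (?M a)) * ?q ^ (N - a) + ?q ^ a * real (card (?M (N - a))))"
    by simp
  also have "\<dots> \<le> (\<Sum>a\<le>N. 2 * (?q ^ N / ?q ^ degree P))"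
  proof (rule sum_mono)
    fix a assume "a \<in> {..N}"
    then have qN: "?q ^ a * ?q ^ (N - a) = ?q ^ N" by (simp flip: power_add)
    have "real (card (?M a)) * ?q ^ (N - a) \<le> ?q ^ a / ?q ^ degree P * ?q ^ (N - a)"
      by (intro mult_right_mono card_monic_multiples_le[OF P]) simp
    moreover have "?q ^ a * real (card (?M (N - a))) \<le> ?q ^ a * (?q ^ (N - a) / ?q ^ degree P)"
      by (intro mult_left_mono card_monic_multiples_le[OF P]) simp
    ultimately show "real (card (?M a)) * ?q ^ (N - a) + ?q ^ a * real (card (?M (N - a)))
        \<le> 2 * (?q ^ N / ?q ^ degree P)"
      using qN by (simp add: field_simps)
  qed
  also have "\<dots> = 2 * (real N + 1) * ?q ^ N / ?q ^ degree P" by simp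
  finally show ?thesis .
qed

lemma card_FN_multiples_le:
  fixes B P :: "'a::{field_gcd,finite} poly"
  assumes P: "prime P"
  shows "real (card {D \<in> FN B N. P dvd D}) \<le> 2 * (real N + 1) * real CARD('a) ^ N / real CARD('a) ^ degree P"
proof -
  have fin: "finite {(A, C) \<in> monic_pairs N. P dvd A \<or> P dvd C}"
    by (rule finite_subset[OF _ finite_monic_pairs]) auto
  have "{D \<in> FN B N. P dvd D} \<subseteq> (\<lambda>(A, C). A * C\<^sup>2) ` {(A, C) \<in> monic_pairs N. P dvd A \<or> P dvd C}"
  proof clarify
    fix D assume D: "D \<in> FN B N" "P dvd D"
    obtain A C where AC: "(A, C) \<in> monic_pairs N" "D = A * C\<^sup>2" "A * C = rad_poly D"
      using D(1) by (rule FN_elem_decompose)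
    from D have "P \<in> prime_factors D" using P by (auto simp: FN_def in_prime_factors_iff)
    then have "P dvd A * C" unfolding AC(3) rad_poly_def by (intro dvd_prodI) auto
    then have "P dvd A \<or> P dvd C" using P by (simp add: prime_dvd_mult_iff)
    with AC show "D \<in> (\<lambda>(A, C). A * C\<^sup>2) ` {(A, C) \<in> monic_pairs N. P dvd A \<or> P dvd C}" by force
  qed
  then have "card {D \<in> FN B N. P dvd D}
      \<le> card ((\<lambda>(A, C). A * C\<^sup>2) ` {(A, C) \<in> monic_pairs N. P dvd A \<or> P dvd C})"
    by (rule card_mono[rotated]) (use fin in simp)
  also have "\<dots> \<le> card {(A, C) \<in> monic_pairs N. P dvd A \<or> P dvd C}"
    by (rule card_image_le[OF fin])
  finally show ?thesis
    using card_monic_pairs_dvd_le[OF prime_poly_monic[OF P], of N] by linarith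
qed

lemma degree_Dk:
  fixes D :: "'a::{field_gcd,finite} poly"
  assumes "D \<noteq> 0"
  shows "degree (Dk D k) = k * card {P \<in> primes_of_degree k. P dvd D}"
proof -
  have "{P \<in> prime_factors D. degree P = k} = {P \<in> primes_of_degree k. P dvd D}"
    using assms by (auto simp: primes_of_degree_def in_prime_factors_iff)
  then show ?thesis
    unfolding Dk_def by (subst degree_prod_sum_eq) (auto simp: primes_of_degree_def)
qed

lemma degree_Dk_le:
  fixes B D :: "'a::{field_gcd,finite} poly"
  assumes "D \<in> FN B N"
  shows "degree (Dk D k) \<le> N"
proof -
  have "degree (Dk D k) = (\<Sum>P\<in>{P \<in> prime_factors D. degree P = k}. degree P)"
    unfolding Dk_def by (rule degree_prod_sum_eq) auto
  also have "\<dots> \<le> (\<Sum>P\<in>prime_factors D. degree P)"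
    by (rule sum_mono2) auto
  also have "\<dots> = N" using assms by (simp add: FN_def degree_rad_poly)
  finally show ?thesis .
qed

lemma sum_degree_Dk_FN_le:
  fixes B :: "'a::{field_gcd,finite} poly"
  shows "(\<Sum>D\<in>FN B N. real (degree (Dk D k))) \<le> 2 * (real N + 1) * real CARD('a) ^ N"
proof -
  let ?q = "real CARD('a)" and ?Pk = "primes_of_degree k :: 'a poly set"
  have "(\<Sum>D\<in>FN B N. degree (Dk D k)) = (\<Sum>D\<in>FN B N. k * card {P \<in> ?Pk. P dvd D})"
    by (intro sum.cong refl degree_Dk) (auto simp: FN_def)
  also have "\<dots> = k * (\<Sum>D\<in>FN B N. card {P \<in> ?Pk. P dvd D})"
    by (simp add: sum_distrib_left)
  also have "(\<Sum>D\<in>FN B N. card {P \<in> ?Pk. P dvd D}) = (\<Sum>P\<in>?Pk. card {D \<in> FN B N. P dvd D})"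
    using sum.swap_restrict[of "FN B N" ?Pk "\<lambda>_ _. 1::nat" "\<lambda>D P. P dvd D"] by simp
  finally have "real (\<Sum>D\<in>FN B N. degree (Dk D k)) = real (k * (\<Sum>P\<in>?Pk. card {D \<in> FN B N. P dvd D}))"
    by (rule arg_cong)
  then have "(\<Sum>D\<in>FN B N. real (degree (Dk D k))) = real k * (\<Sum>P\<in>?Pk. real (card {D \<in> FN B N. P dvd D}))"
    by simp
  also have "\<dots> \<le> real k * (\<Sum>P\<in>?Pk. 2 * (real N + 1) * ?q ^ N / ?q ^ k)"
    using card_FN_multiples_le by (intro mult_left_mono sum_mono) (auto simp: primes_of_degree_def)
  also have "\<dots> = real (k * card ?Pk) / ?q ^ k * (2 * (real N + 1) * ?q ^ N)"
    by simp
  also have "\<dots> \<le> 1 * (2 * (real N + 1) * ?q ^ N)"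
  proof (intro mult_right_mono)
    have "real (k * card ?Pk) \<le> ?q ^ k"
      using of_nat_mono[OF degree_times_card_primes_of_degree_le[of k, where 'a='a]] by simp
    then show "real (k * card ?Pk) / ?q ^ k \<le> 1" by simp
  qed simp
  finally show ?thesis by simp
qed

section \<open>Sieving the values \<open>Q * B + 1\<close>\<close>

lemma mult_plus_one_mem_monic_polys:
  fixes B Q :: "'a::idom poly"
  assumes B: "lead_coeff B = 1" and Q: "Q \<in> monic_polys a" and "0 < a"
  shows "Q * B + 1 \<in> monic_polys (a + degree B)"
proof -
  have "B \<in> monic_polys (degree B)" using B by (simp add: monic_polys_def)
  with Q have QB: "Q * B \<in> monic_polys (a + degree B)" by (rule mult_mem_monic_polys)
  then have "degree (1 :: 'a poly) < degree (Q * B)" using \<open>0 < a\<close> by (simp add: monic_polys_def)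
  then have "degree (Q * B + 1) = degree (Q * B)" "coeff (Q * B + 1) (degree (Q * B)) = lead_coeff (Q * B)"
    by (simp_all add: degree_add_eq_left)
  with QB show ?thesis unfolding monic_polys_def by (metis (mono_tags) mem_Collect_eq)
qed

lemma sum_inverse_powers_le:
  fixes q :: real
  assumes "2 \<le> q"
  shows "(\<Sum>d=1..h. 1 / q ^ d) \<le> 1 / (q - 1)"
proof -
  have "(\<Sum>d=1..h. 1 / q ^ d) = (1 - 1 / q ^ h) / (q - 1)"
  proof (induction h)
    case (Suc h)
    have "(\<Sum>d=1..Suc h. 1 / q ^ d) = (1 - 1 / q ^ h) / (q - 1) + 1 / q ^ Suc h"
      using Suc by simp
    also have "\<dots> = (1 - 1 / q ^ Suc h) / (q - 1)"
      using assms by (simp add: field_simps)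
    finally show ?case .
  qed simp
  also have "\<dots> \<le> 1 / (q - 1)" using assms by (intro divide_right_mono) auto
  finally show ?thesis .
qed

lemma sum_powers_le:
  fixes q :: real
  assumes "2 \<le> q"
  shows "(\<Sum>d=1..h. q ^ d) \<le> q ^ (h + 1)"
proof (induction h)
  case (Suc h)
  have "(\<Sum>d=1..Suc h. q ^ d) \<le> 2 * q ^ (h + 1)" using Suc by simp
  also have "\<dots> \<le> q ^ (Suc h + 1)" using assms by simp
  finally show ?case .
qed (use assms in simp)

lemma sum_primes_degree_le_square_le:
  fixes X :: real
  assumes "0 \<le> X" and q: "2 \<le> real CARD('a)"
  shows "(\<Sum>P\<in>(primes_degree_le h :: 'a::{field_gcd,finite} poly set). X / real CARD('a) ^ (2 * degree P) + 1)
    \<le> X / (real CARD('a) - 1) + real CARD('a) ^ (h + 1)"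
proof -
  let ?q = "real CARD('a)"
  have "(\<Sum>P\<in>(primes_degree_le h :: 'a poly set). X / ?q ^ (2 * degree P) + 1)
      \<le> (\<Sum>d=1..h. ?q ^ d * (X / ?q ^ (2 * d) + 1))"
    using assms by (intro sum_primes_degree_le_le_sum_powers) auto
  also have "\<dots> = (\<Sum>d=1..h. X * (1 / ?q ^ d) + ?q ^ d)"
  proof (rule sum.cong[OF refl])
    fix d
    have "?q ^ (2 * d) = ?q ^ d * ?q ^ d" by (simp flip: power_add mult_2)
    then show "?q ^ d * (X / ?q ^ (2 * d) + 1) = X * (1 / ?q ^ d) + ?q ^ d"
      using q by (simp add: field_simps)
  qed
  also have "\<dots> = X * (\<Sum>d=1..h. 1 / ?q ^ d) + (\<Sum>d=1..h. ?q ^ d)"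
    by (simp add: sum.distrib sum_distrib_left)
  also have "\<dots> \<le> X * (1 / (?q - 1)) + ?q ^ (h + 1)"
    using assms by (intro add_mono mult_left_mono sum_inverse_powers_le sum_powers_le) auto
  finally show ?thesis by simp
qed

lemma sum_primes_degree_le_product_le:
  fixes X Y :: real
  assumes "0 \<le> X" "0 \<le> Y" and q: "2 \<le> real CARD('a)"
  shows "(\<Sum>P\<in>(primes_degree_le h :: 'a::{field_gcd,finite} poly set).
      (X / real CARD('a) ^ degree P + 1) * (Y / real CARD('a) ^ degree P + 1))
    \<le> X * Y / (real CARD('a) - 1) + real h * X + real h * Y + real CARD('a) ^ (h + 1)"
proof -
  let ?q = "real CARD('a)"
  have "(\<Sum>P\<in>(primes_degree_le h :: 'a poly set). (X / ?q ^ degree P + 1) * (Y / ?q ^ degree P + 1))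
      \<le> (\<Sum>d=1..h. ?q ^ d * ((X / ?q ^ d + 1) * (Y / ?q ^ d + 1)))"
    using assms by (intro sum_primes_degree_le_le_sum_powers) auto
  also have "\<dots> = (\<Sum>d=1..h. X * Y * (1 / ?q ^ d) + X + Y + ?q ^ d)"
    using q by (intro sum.cong refl) (simp add: field_simps)
  also have "\<dots> = X * Y * (\<Sum>d=1..h. 1 / ?q ^ d) + real h * X + real h * Y + (\<Sum>d=1..h. ?q ^ d)"
    by (simp add: sum.distrib sum_distrib_left)
  also have "\<dots> \<le> X * Y * (1 / (?q - 1)) + real h * X + real h * Y + ?q ^ (h + 1)"
    using assms by (intro add_mono mult_left_mono sum_inverse_powers_le sum_powers_le) auto
  finally show ?thesis by simp
qed

lemma power_diff_le:
  fixes q :: real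
  assumes "1 \<le> q"
  shows "q ^ (m - j) \<le> q ^ m / q ^ j + 1"
proof (cases "j \<le> m")
  case True
  then have "q ^ m = q ^ (m - j) * q ^ j" by (simp flip: power_add)
  with assms show ?thesis by simp
qed (use assms in simp)

lemma card_monic_dvd_mult_plus_one_le_real:
  fixes M B :: "'a::{field_gcd,finite} poly"
  assumes "M \<noteq> 0"
  shows "real (card {Q \<in> monic_polys m. M dvd Q * B + 1}) \<le> real CARD('a) ^ m / real CARD('a) ^ degree M + 1"
proof -
  have "real (card {Q \<in> monic_polys m. M dvd Q * B + 1}) \<le> real (CARD('a) ^ (m - degree M))"
    using card_monic_dvd_mult_plus_one_le[OF assms] by (rule of_nat_mono)
  also have "\<dots> = real CARD('a) ^ (m - degree M)" by simp
  also have "\<dots> \<le> real CARD('a) ^ m / real CARD('a) ^ degree M + 1"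
    by (rule power_diff_le) simp
  finally show ?thesis .
qed

lemma not_squarefree_obtains_prime:
  fixes X :: "'a::field_gcd poly"
  assumes "X \<noteq> 0" "\<not> squarefree X"
  obtains P where "prime P" "P\<^sup>2 dvd X" "2 * degree P \<le> degree X"
proof -
  obtain P where P: "prime P" "P\<^sup>2 dvd X"
    using assms squarefree_factorial_semiring by blast
  moreover have "2 * degree P = degree (P\<^sup>2)" using P(1) by (simp add: degree_power_eq)
  moreover have "degree (P\<^sup>2) \<le> degree X" using P(2) assms(1) by (rule dvd_imp_degree_le)
  ultimately show ?thesis using that by simp
qed

lemma not_coprime_obtains_prime:
  fixes X Y :: "'a::field_gcd poly"
  assumes "X \<noteq> 0" "\<not> coprime X Y"
  obtains P where "prime P" "P dvd X" "P dvd Y"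
proof -
  obtain g where g: "g dvd X" "g dvd Y" "\<not> is_unit g"
    using assms(2) by (rule not_coprimeE)
  moreover have "g \<noteq> 0" using g(1) assms(1) by auto
  ultimately obtain P where "prime P" "P dvd g" using prime_divisor_exists by blast
  with g show ?thesis using that dvd_trans by blast
qed

lemma card_monic_not_squarefree_le:
  fixes B :: "'a::{field_gcd,finite} poly"
  assumes B: "lead_coeff B = 1" and "0 < a" and q: "2 \<le> real CARD('a)"
  shows "real (card {Q \<in> monic_polys a. \<not> squarefree (Q * B + 1)})
    \<le> real CARD('a) ^ a / (real CARD('a) - 1) + real CARD('a) ^ ((a + degree B) div 2 + 1)"
proof -
  let ?q = "real CARD('a)" and ?h = "(a + degree B) div 2"
  let ?Pl = "primes_degree_le ?h :: 'a poly set"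
  have "{Q \<in> monic_polys a. \<not> squarefree (Q * B + 1)}
      \<subseteq> (\<Union>P\<in>?Pl. {Q \<in> monic_polys a. P\<^sup>2 dvd Q * B + 1})"
  proof clarify
    fix Q assume Q: "Q \<in> monic_polys a" "\<not> squarefree (Q * B + 1)"
    have QB: "Q * B + 1 \<in> monic_polys (a + degree B)"
      using B Q(1) \<open>0 < a\<close> by (rule mult_plus_one_mem_monic_polys)
    obtain P where P: "prime P" "P\<^sup>2 dvd Q * B + 1" "2 * degree P \<le> degree (Q * B + 1)"
      using monic_polys_nonzero[OF QB] Q(2) by (rule not_squarefree_obtains_prime)
    then have "P \<in> ?Pl" using QB by (simp add: primes_degree_le_def monic_polys_def)
    with Q P show "Q \<in> (\<Union>P\<in>?Pl. {Q \<in> monic_polys a. P\<^sup>2 dvd Q * B + 1})" by blast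
  qed
  then have "card {Q \<in> monic_polys a. \<not> squarefree (Q * B + 1)}
      \<le> (\<Sum>P\<in>?Pl. card {Q \<in> monic_polys a. P\<^sup>2 dvd Q * B + 1})"
    by (intro order_trans[OF card_mono card_UN_le]) auto
  then have "real (card {Q \<in> monic_polys a. \<not> squarefree (Q * B + 1)})
      \<le> (\<Sum>P\<in>?Pl. real (card {Q \<in> monic_polys a. P\<^sup>2 dvd Q * B + 1}))"
    by (simp flip: of_nat_sum)
  also have "\<dots> \<le> (\<Sum>P\<in>?Pl. ?q ^ a / ?q ^ (2 * degree P) + 1)"
  proof (rule sum_mono)
    fix P :: "'a poly" assume "P \<in> ?Pl"
    then have "P \<noteq> 0" by (auto simp: primes_degree_le_def)
    then show "real (card {Q \<in> monic_polys a. P\<^sup>2 dvd Q * B + 1}) \<le> ?q ^ a / ?q ^ (2 * degree P) + 1"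
      using card_monic_dvd_mult_plus_one_le_real[of "P\<^sup>2" a B] by (simp add: degree_power_eq)
  qed
  also have "\<dots> \<le> ?q ^ a / (?q - 1) + ?q ^ (?h + 1)"
    using q by (intro sum_primes_degree_le_square_le) auto
  finally show ?thesis .
qed

lemma card_monic_not_coprime_le:
  fixes B :: "'a::{field_gcd,finite} poly"
  assumes B: "lead_coeff B = 1" and "0 < a" "0 < c" and q: "2 \<le> real CARD('a)"
  defines "h \<equiv> min (a + degree B) (c + degree B)"
  shows "real (card {(Q1, Q2) \<in> monic_polys a \<times> monic_polys c. \<not> coprime (Q1 * B + 1) (Q2 * B + 1)})
    \<le> real CARD('a) ^ a * real CARD('a) ^ c / (real CARD('a) - 1)
      + real h * real CARD('a) ^ a + real h * real CARD('a) ^ c + real CARD('a) ^ (h + 1)"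
proof -
  let ?q = "real CARD('a)" and ?S = "\<lambda>P m. {Q \<in> monic_polys m. P dvd Q * B + 1}"
  let ?Pl = "primes_degree_le h :: 'a poly set"
  have "{(Q1, Q2) \<in> monic_polys a \<times> monic_polys c. \<not> coprime (Q1 * B + 1) (Q2 * B + 1)}
      \<subseteq> (\<Union>P\<in>?Pl. ?S P a \<times> ?S P c)"
  proof clarify
    fix Q1 Q2 assume Q: "Q1 \<in> monic_polys a" "Q2 \<in> monic_polys c" "\<not> coprime (Q1 * B + 1) (Q2 * B + 1)"
    have QB: "Q1 * B + 1 \<in> monic_polys (a + degree B)" "Q2 * B + 1 \<in> monic_polys (c + degree B)"
      using B Q \<open>0 < a\<close> \<open>0 < c\<close> by (auto intro: mult_plus_one_mem_monic_polys)
    obtain P where P: "prime P" "P dvd Q1 * B + 1" "P dvd Q2 * B + 1"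
      using not_coprime_obtains_prime[OF monic_polys_nonzero[OF QB(1)] Q(3)] .
    have "degree P \<le> degree (Q1 * B + 1)" "degree P \<le> degree (Q2 * B + 1)"
      using P QB by (auto intro: dvd_imp_degree_le dest: monic_polys_nonzero)
    then have "degree P \<le> a + degree B" "degree P \<le> c + degree B"
      using QB unfolding monic_polys_def by auto
    then have "P \<in> ?Pl" using P(1) by (simp add: primes_degree_le_def h_def)
    with Q P show "(Q1, Q2) \<in> (\<Union>P\<in>?Pl. ?S P a \<times> ?S P c)" by blast
  qed
  then have "card {(Q1, Q2) \<in> monic_polys a \<times> monic_polys c. \<not> coprime (Q1 * B + 1) (Q2 * B + 1)}
      \<le> (\<Sum>P\<in>?Pl. card (?S P a \<times> ?S P c))"
    by (intro order_trans[OF card_mono card_UN_le]) auto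
  also have "\<dots> = (\<Sum>P\<in>?Pl. card (?S P a) * card (?S P c))"
    by (simp add: card_cartesian_product)
  finally have "card {(Q1, Q2) \<in> monic_polys a \<times> monic_polys c. \<not> coprime (Q1 * B + 1) (Q2 * B + 1)}
      \<le> (\<Sum>P\<in>?Pl. card (?S P a) * card (?S P c))" .
  then have "real (card {(Q1, Q2) \<in> monic_polys a \<times> monic_polys c. \<not> coprime (Q1 * B + 1) (Q2 * B + 1)})
      \<le> (\<Sum>P\<in>?Pl. real (card (?S P a)) * real (card (?S P c)))"
    by (simp flip: of_nat_sum of_nat_mult)
  also have "\<dots> \<le> (\<Sum>P\<in>?Pl. (?q ^ a / ?q ^ degree P + 1) * (?q ^ c / ?q ^ degree P + 1))"
  proof (rule sum_mono)
    fix P :: "'a poly" assume "P \<in> ?Pl"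
    then have "P \<noteq> 0" by (auto simp: primes_degree_le_def)
    then show "real (card (?S P a)) * real (card (?S P c)) \<le> (?q ^ a / ?q ^ degree P + 1) * (?q ^ c / ?q ^ degree P + 1)"
      by (intro mult_mono card_monic_dvd_mult_plus_one_le_real) auto
  qed
  also have "\<dots> \<le> ?q ^ a * ?q ^ c / (?q - 1) + real h * ?q ^ a + real h * ?q ^ c + ?q ^ (h + 1)"
    using q by (intro sum_primes_degree_le_product_le) auto
  finally show ?thesis .
qed

definition good_pairs :: "'a::field_gcd poly \<Rightarrow> nat \<Rightarrow> nat \<Rightarrow> ('a poly \<times> 'a poly) set" where
  "good_pairs B a c = {(Q1, Q2) \<in> monic_polys a \<times> monic_polys c.
     squarefree (Q1 * B + 1) \<and> squarefree (Q2 * B + 1) \<and> coprime (Q1 * B + 1) (Q2 * B + 1)}"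

lemma finite_good_pairs [simp]: "finite (good_pairs (B :: 'a::{field_gcd,finite} poly) a c)"
  by (rule finite_subset[of _ "monic_polys a \<times> monic_polys c"]) (auto simp: good_pairs_def)

lemma card_monic_pairs_le_good_pairs_plus:
  fixes B :: "'a::{field_gcd,finite} poly"
  shows "CARD('a) ^ a * CARD('a) ^ c \<le> card (good_pairs B a c)
    + card {Q \<in> monic_polys a. \<not> squarefree (Q * B + 1)} * CARD('a) ^ c
    + CARD('a) ^ a * card {Q \<in> monic_polys c. \<not> squarefree (Q * B + 1)}
    + card {(Q1, Q2) \<in> monic_polys a \<times> monic_polys c. \<not> coprime (Q1 * B + 1) (Q2 * B + 1)}"
proof -
  let ?Ma = "monic_polys a :: 'a poly set" and ?Mc = "monic_polys c :: 'a poly set"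
  let ?NS = "\<lambda>M. {Q \<in> M. \<not> squarefree (Q * B + 1)}"
  let ?NC = "{(Q1, Q2) \<in> ?Ma \<times> ?Mc. \<not> coprime (Q1 * B + 1) (Q2 * B + 1)}"
  let ?Bad = "?NS ?Ma \<times> ?Mc \<union> ?Ma \<times> ?NS ?Mc \<union> ?NC"
  have "finite ?Bad"
    by (rule finite_subset[of _ "?Ma \<times> ?Mc"]) auto
  have "?Ma \<times> ?Mc \<subseteq> good_pairs B a c \<union> ?Bad"
    by (auto simp: good_pairs_def)
  then have "card (?Ma \<times> ?Mc) \<le> card (good_pairs B a c \<union> ?Bad)"
    by (rule card_mono[rotated]) (use \<open>finite ?Bad\<close> in simp)
  also have "\<dots> \<le> card (good_pairs B a c) + card ?Bad"
    by (rule card_Un_le)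
  also have "card ?Bad \<le> card (?NS ?Ma \<times> ?Mc) + card (?Ma \<times> ?NS ?Mc) + card ?NC"
    by (rule order_trans[OF card_Un_le add_right_mono[OF card_Un_le]])
  finally show ?thesis by (simp add: card_cartesian_product card_monic_polys)
qed

lemma twenty_power_le:
  fixes q :: real
  assumes "7 \<le> q" "k + 2 \<le> m"
  shows "20 * q ^ k \<le> q ^ m"
proof -
  have "20 * q ^ k \<le> q\<^sup>2 * q ^ k"
    using assms power_mono[of 7 q 2] by (intro mult_right_mono) auto
  also have "\<dots> = q ^ (k + 2)" by (simp add: power_add power2_eq_square)
  also have "\<dots> \<le> q ^ m" using assms by (intro power_increasing) auto
  finally show ?thesis .
qed

lemma forty_mult_le_power:
  fixes q :: real
  assumes "7 \<le> q" "3 \<le> n"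
  shows "40 * real n \<le> q ^ n"
proof -
  have "40 * n \<le> (7::nat) ^ n"
    using assms(2) by (induction n rule: dec_induct) auto
  then have "40 * real n \<le> 7 ^ n" by (metis of_nat_le_iff of_nat_mult of_nat_numeral of_nat_power)
  also have "\<dots> \<le> q ^ n" using assms by (intro power_mono) auto
  finally show ?thesis .
qed

lemma card_monic_not_squarefree_le_fraction:
  fixes B :: "'a::{field_gcd,finite} poly"
  assumes B: "lead_coeff B = 1" and q: "7 \<le> CARD('a)" and a: "degree B + 6 \<le> a"
  shows "real (card {Q \<in> monic_polys a. \<not> squarefree (Q * B + 1)})
    \<le> real CARD('a) ^ a / (real CARD('a) - 1) + real CARD('a) ^ a / 20"
proof -
  have "20 * real CARD('a) ^ ((a + degree B) div 2 + 1) \<le> real CARD('a) ^ a"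
    using q a by (intro twenty_power_le) auto
  with card_monic_not_squarefree_le[OF B, of a] q a show ?thesis by simp
qed

lemma card_monic_not_coprime_le_fraction:
  fixes B :: "'a::{field_gcd,finite} poly"
  assumes B: "lead_coeff B = 1" and q: "7 \<le> CARD('a)"
    and a: "degree B + 6 \<le> a" and c: "degree B + 6 \<le> c"
  shows "real (card {(Q1, Q2) \<in> monic_polys a \<times> monic_polys c. \<not> coprime (Q1 * B + 1) (Q2 * B + 1)})
    \<le> real CARD('a) ^ a * real CARD('a) ^ c / (real CARD('a) - 1)
      + 3 * (real CARD('a) ^ a * real CARD('a) ^ c / 20)"
proof -
  let ?q = "real CARD('a)"
  define X Y h where "X = ?q ^ a" and "Y = ?q ^ c" and "h = min (a + degree B) (c + degree B)"
  have q7: "7 \<le> ?q" using q by simp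
  have small: "t * Z \<le> X * Y / 20" if "20 * t \<le> W" "0 \<le> Z" "W * Z = X * Y" for t W Z :: real
  proof -
    have "20 * (t * Z) \<le> W * Z" using mult_right_mono[OF that(1,2)] by (simp add: mult.assoc)
    with that(3) show ?thesis by linarith
  qed
  have "20 * real h \<le> 40 * real a" "20 * real h \<le> 40 * real c" using a c by (auto simp: h_def)
  moreover have "40 * real a \<le> X" "40 * real c \<le> Y"
    unfolding X_def Y_def using q7 a c by (auto intro!: forty_mult_le_power)
  ultimately have "20 * real h \<le> Y" "20 * real h \<le> X" by linarith+
  then have "real h * X \<le> X * Y / 20" "real h * Y \<le> X * Y / 20"
    using small[of "real h" Y X] small[of "real h" X Y] by (simp_all add: X_def Y_def mult.commute)
  moreover have "20 * ?q ^ (h + 1) \<le> ?q ^ (a + c)"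
    using q7 a c by (intro twenty_power_le) (auto simp: h_def)
  then have "?q ^ (h + 1) * 1 \<le> X * Y / 20"
    by (intro small) (auto simp: X_def Y_def power_add)
  ultimately show ?thesis
    using card_monic_not_coprime_le[OF B, of a c] a c q7 unfolding X_def Y_def h_def by linarith
qed

text \<open>For \<open>q \<ge> 7\<close> the three kinds of bad pairs make up at most \<open>3 / (q - 1) + 5 / 20 \<le> 3 / 4\<close>
  of all pairs.\<close>

lemma card_good_pairs_ge:
  fixes B :: "'a::{field_gcd,finite} poly"
  assumes B: "lead_coeff B = 1" and q: "7 \<le> CARD('a)"
    and a: "degree B + 6 \<le> a" and c: "degree B + 6 \<le> c"
  shows "real CARD('a) ^ a * real CARD('a) ^ c / 4 \<le> real (card (good_pairs B a c))"
proof -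
  let ?q = "real CARD('a)"
  define X Y where "X = ?q ^ a" and "Y = ?q ^ c"
  define NSa NSc where
    "NSa = real (card {Q \<in> monic_polys a. \<not> squarefree (Q * B + 1)})" and
    "NSc = real (card {Q \<in> monic_polys c. \<not> squarefree (Q * B + 1)})"
  have XY: "0 \<le> X" "0 \<le> Y" by (simp_all add: X_def Y_def)
  have "X * Y \<le> real (card (good_pairs B a c)) + NSa * Y + X * NSc
      + real (card {(Q1, Q2) \<in> monic_polys a \<times> monic_polys c. \<not> coprime (Q1 * B + 1) (Q2 * B + 1)})"
    using of_nat_mono[OF card_monic_pairs_le_good_pairs_plus[of a c B], where 'a=real]
    by (simp add: X_def Y_def NSa_def NSc_def)
  moreover have "NSa * Y \<le> (X / (?q - 1) + X / 20) * Y" "X * NSc \<le> X * (Y / (?q - 1) + Y / 20)"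
    using card_monic_not_squarefree_le_fraction[OF B q] a c XY
    by (auto simp: NSa_def NSc_def X_def Y_def intro!: mult_right_mono mult_left_mono)
  moreover have "X * Y / (?q - 1) \<le> X * Y / 6"
    using XY q by (intro divide_left_mono mult_nonneg_nonneg) auto
  ultimately show ?thesis
    using card_monic_not_coprime_le_fraction[OF B q a c]
    by (simp add: X_def Y_def field_simps)
qed

section \<open>Lower bound for \<open>|F_N(B)|\<close>\<close>

lemma coprime_multiplicity_eq_0:
  fixes A C P :: "'a::factorial_semiring"
  assumes "coprime A C" "prime P"
  shows "multiplicity P A = 0 \<or> multiplicity P C = 0"
  using assms by (metis coprime_common_divisor not_dvd_imp_multiplicity_0 not_prime_unit)

lemma multiplicity_mult_square:
  fixes A C P :: "'a::factorial_semiring"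
  assumes "A \<noteq> 0" "C \<noteq> 0" "prime P"
  shows "multiplicity P (A * C\<^sup>2) = multiplicity P A + 2 * multiplicity P C"
  using assms by (simp add: prime_elem_multiplicity_mult_distrib prime_elem_multiplicity_power_distrib)

lemma multiplicity_squarefree_le_1:
  fixes A P :: "'a::factorial_semiring"
  assumes "A \<noteq> 0" "squarefree A" "prime P"
  shows "multiplicity P A \<le> 1"
  using assms squarefree_factorial_semiring'' by blast

text \<open>\<open>C\<close> is recovered from \<open>A * C\<^sup>2\<close>: its multiplicities are those of \<open>A * C\<^sup>2\<close> halved
  and rounded down, as \<open>A\<close> is squarefree.\<close>

lemma mult_square_eq_imp_eq:
  fixes A C A' C' :: "'a::field_gcd poly"
  assumes "lead_coeff A = 1" "lead_coeff C = 1" "squarefree A" "squarefree C" "coprime A C"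
    and "lead_coeff A' = 1" "lead_coeff C' = 1" "squarefree A'" "squarefree C'" "coprime A' C'"
    and eq: "A * C\<^sup>2 = A' * C'\<^sup>2"
  shows "A = A'" "C = C'"
proof -
  have nz: "A \<noteq> 0" "C \<noteq> 0" "A' \<noteq> 0" "C' \<noteq> 0" using assms by auto
  have half: "multiplicity P C = multiplicity P (A * C\<^sup>2) div 2"
    if "A \<noteq> 0" "C \<noteq> 0" "squarefree A" "prime P" for A C P :: "'a poly"
    using multiplicity_mult_square[OF that(1,2,4)] multiplicity_squarefree_le_1[OF that(1,3,4)] by simp
  have "multiplicity P C = multiplicity P C'" if "prime P" for P
  proof -
    have "multiplicity P C = multiplicity P (A * C\<^sup>2) div 2"
      using nz assms that by (intro half) auto
    also have "\<dots> = multiplicity P C'"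
      unfolding eq using nz assms that by (intro half[symmetric]) auto
    finally show ?thesis .
  qed
  with nz have "normalize C = normalize C'" by (intro multiplicity_eq_imp_eq) auto
  then show "C = C'" using assms by (simp add: normalize_monic_poly)
  with eq nz show "A = A'" by simp
qed

lemma rad_poly_squarefree:
  fixes X :: "'a::{field_gcd,finite} poly"
  assumes "lead_coeff X = 1" "squarefree X"
  shows "rad_poly X = X"
proof -
  have "X \<noteq> 0" using assms by auto
  have "X = (\<Prod>P\<in>prime_factors X. P ^ multiplicity P X)"
    using prod_prime_factors[OF \<open>X \<noteq> 0\<close>] normalize_monic_poly[OF assms(1)] by simp
  also have "\<dots> = rad_poly X"
    using squarefree_factorial_semiring'[OF \<open>X \<noteq> 0\<close>] assms(2) by (simp add: rad_poly_def)
  finally show ?thesis ..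
qed

lemma mult_square_mem_FN:
  fixes A C B :: "'a::{field_gcd,finite} poly"
  assumes A: "lead_coeff A = 1" "squarefree A" and C: "lead_coeff C = 1" "squarefree C"
    and "coprime A C" "coprime A B" "coprime C B" "(degree A + 2 * degree C) mod 3 = 0"
  shows "A * C\<^sup>2 \<in> FN B (degree A + degree C)"
proof -
  have nz: "A \<noteq> 0" "C \<noteq> 0" using A C by auto
  have "cube_free (A * C\<^sup>2)"
    unfolding cube_free_def
  proof (intro allI impI)
    fix P :: "'a poly" assume "prime P"
    have "multiplicity P (A * C\<^sup>2) < 3"
      using multiplicity_mult_square[OF nz \<open>prime P\<close>] coprime_multiplicity_eq_0[OF \<open>coprime A C\<close> \<open>prime P\<close>]
        multiplicity_squarefree_le_1[OF nz(1) A(2) \<open>prime P\<close>] multiplicity_squarefree_le_1[OF nz(2) C(2) \<open>prime P\<close>]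
      by linarith
    then show "\<not> P ^ 3 dvd A * C\<^sup>2"
      using nz \<open>prime P\<close> by (simp add: power_dvd_iff_le_multiplicity not_le)
  qed
  moreover have "rad_poly (A * C\<^sup>2) = rad_poly (A * C)"
    using nz by (simp add: rad_poly_def power2_eq_square prime_factors_product)
  moreover have "rad_poly (A * C) = A * C"
    using assms by (intro rad_poly_squarefree squarefree_mult_coprime) (simp_all add: lead_coeff_mult)
  ultimately have "degree (rad_poly (A * C\<^sup>2)) = degree A + degree C"
    using nz by (simp add: degree_mult_eq)
  moreover have "lead_coeff (A * C\<^sup>2) = 1"
    using A C by (simp add: lead_coeff_mult lead_coeff_power)
  moreover have "degree (A * C\<^sup>2) mod 3 = 0"
    using nz assms by (simp add: degree_mult_eq degree_power_eq)
  moreover have "coprime (A * C\<^sup>2) B"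
    using assms by simp
  ultimately show ?thesis
    using \<open>cube_free (A * C\<^sup>2)\<close> unfolding FN_def by blast
qed

lemma good_pairs_mult_square_mem_FN:
  fixes B B' :: "'a::{field_gcd,finite} poly"
  assumes B': "lead_coeff B' = 1" "B dvd B'" and Q: "(Q1, Q2) \<in> good_pairs B' a c"
    and "0 < a" "0 < c" "(a + 2 * c) mod 3 = 0"
  shows "(Q1 * B' + 1) * (Q2 * B' + 1)\<^sup>2 \<in> FN B (a + c + 2 * degree B')"
proof -
  have "Q1 * B' + 1 \<in> monic_polys (a + degree B')" "Q2 * B' + 1 \<in> monic_polys (c + degree B')"
    using Q B'(1) \<open>0 < a\<close> \<open>0 < c\<close> by (auto simp: good_pairs_def intro: mult_plus_one_mem_monic_polys)
  then have A: "lead_coeff (Q1 * B' + 1) = 1" "degree (Q1 * B' + 1) = a + degree B'"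
    and C: "lead_coeff (Q2 * B' + 1) = 1" "degree (Q2 * B' + 1) = c + degree B'"
    unfolding monic_polys_def by blast+
  have "(Q1 * B' + 1) * (Q2 * B' + 1)\<^sup>2 \<in> FN B (degree (Q1 * B' + 1) + degree (Q2 * B' + 1))"
  proof (rule mult_square_mem_FN)
    show "(degree (Q1 * B' + 1) + 2 * degree (Q2 * B' + 1)) mod 3 = 0"
      using A(2) C(2) \<open>(a + 2 * c) mod 3 = 0\<close> by presburger
  qed (use A C Q coprime_mult_plus_one[OF B'(2)] in \<open>auto simp: good_pairs_def\<close>)
  moreover have "degree (Q1 * B' + 1) + degree (Q2 * B' + 1) = a + c + 2 * degree B'"
    using A(2) C(2) by simp
  ultimately show ?thesis by simp
qed

lemma inj_on_good_pairs_mult_square: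
  fixes B' :: "'a::field_gcd poly"
  assumes B': "lead_coeff B' = 1" and pos: "\<And>c. c \<in> I \<Longrightarrow> 0 < c \<and> 0 < f c"
  shows "inj_on (\<lambda>(c, Q1, Q2). (Q1 * B' + 1) * (Q2 * B' + 1)\<^sup>2) (SIGMA c:I. good_pairs B' (f c) c)"
proof (rule inj_onI)
  fix x y
  assume "x \<in> (SIGMA c:I. good_pairs B' (f c) c)" "y \<in> (SIGMA c:I. good_pairs B' (f c) c)"
    and xy: "(\<lambda>(c, Q1, Q2). (Q1 * B' + 1) * (Q2 * B' + 1)\<^sup>2) x = (\<lambda>(c, Q1, Q2). (Q1 * B' + 1) * (Q2 * B' + 1)\<^sup>2) y"
  then obtain c Q1 Q2 c' Q1' Q2' where x: "x = (c, Q1, Q2)" and y: "y = (c', Q1', Q2')"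
    and Q: "c \<in> I" "(Q1, Q2) \<in> good_pairs B' (f c) c" and Q': "c' \<in> I" "(Q1', Q2') \<in> good_pairs B' (f c') c'"
    by (cases x, cases y) auto
  from xy have eq: "(Q1 * B' + 1) * (Q2 * B' + 1)\<^sup>2 = (Q1' * B' + 1) * (Q2' * B' + 1)\<^sup>2"
    by (simp add: x y)
  have "Q1 * B' + 1 \<in> monic_polys (f c + degree B')" "Q2 * B' + 1 \<in> monic_polys (c + degree B')"
    "Q1' * B' + 1 \<in> monic_polys (f c' + degree B')" "Q2' * B' + 1 \<in> monic_polys (c' + degree B')"
    using Q Q' pos B' by (auto simp: good_pairs_def intro: mult_plus_one_mem_monic_polys)
  then have lc: "lead_coeff (Q1 * B' + 1) = 1" "lead_coeff (Q2 * B' + 1) = 1"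
      "lead_coeff (Q1' * B' + 1) = 1" "lead_coeff (Q2' * B' + 1) = 1"
    and deg: "degree (Q2 * B' + 1) = c + degree B'" "degree (Q2' * B' + 1) = c' + degree B'"
    unfolding monic_polys_def by blast+
  have sq: "squarefree (Q1 * B' + 1)" "squarefree (Q2 * B' + 1)" "coprime (Q1 * B' + 1) (Q2 * B' + 1)"
    "squarefree (Q1' * B' + 1)" "squarefree (Q2' * B' + 1)" "coprime (Q1' * B' + 1) (Q2' * B' + 1)"
    using Q(2) Q'(2) by (auto simp: good_pairs_def)
  note unique = mult_square_eq_imp_eq[OF lc(1,2) sq(1-3) lc(3,4) sq(4-6) eq]
  moreover have "B' \<noteq> 0" using B' by auto
  ultimately have "Q1 = Q1'" "Q2 = Q2'" by simp_all
  moreover have "c = c'" using deg \<open>Q2 = Q2'\<close> by simp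
  ultimately show "x = y" by (simp add: x y)
qed

lemma admissible_degrees_exist:
  fixes b N :: nat
  assumes N: "6 * b + 18 \<le> N"
  obtains I where "finite I" "N + 1 \<le> 12 * card I"
    "\<And>c. c \<in> I \<Longrightarrow> b + 6 \<le> c \<and> b + 6 \<le> N - 2 * b - c \<and> (N - 2 * b - c + 2 * c) mod 3 = 0"
proof -
  define M where "M = N - 2 * b"
  define L where "L = (N - 4 * b - 11) div 3"
  define r where "r = (2 * (M + b)) mod 3"
  define I where "I = (\<lambda>t. b + 6 + r + 3 * t) ` {..<L}"
  have r: "r \<le> 2" "(M + b + r) mod 3 = 0" unfolding r_def by (simp_all add: mod_add_right_eq)
  have L: "3 * L + 4 * b + 11 \<le> N" "N + 1 \<le> 12 * L"
  proof -
    have "3 * L + (N - 4 * b - 11) mod 3 = N - 4 * b - 11" unfolding L_def by (rule mult_div_mod_eq)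
    moreover have "(N - 4 * b - 11) mod 3 < 3" by simp
    ultimately show "3 * L + 4 * b + 11 \<le> N" "N + 1 \<le> 12 * L" using N by linarith+
  qed
  have adm: "b + 6 \<le> c \<and> b + 6 \<le> M - c \<and> (M - c + 2 * c) mod 3 = 0" if "c \<in> I" for c
  proof -
    obtain t where t: "t < L" "c = b + 6 + r + 3 * t"
      using \<open>c \<in> I\<close> unfolding I_def by auto
    then have "c + b + 6 \<le> M" using L(1) r(1) unfolding M_def by linarith
    moreover have "M - c + 2 * c = (M + b + r) + 3 * (t + 2)" using calculation t(2) by arith
    ultimately show ?thesis using t(2) r(2) by (simp only: mod_mult_self2) auto
  qed
  have "card I = L"
    unfolding I_def by (subst card_image) (auto intro: inj_onI)
  show ?thesis
  proof (rule that)
    show "finite I" by (simp add: I_def)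
    show "N + 1 \<le> 12 * card I" using L(2) \<open>card I = L\<close> by simp
  qed (use adm in \<open>simp add: M_def\<close>)
qed

lemma sum_card_good_pairs_le_card_FN:
  fixes B B' :: "'a::{field_gcd,finite} poly"
  assumes B': "lead_coeff B' = 1" "B dvd B'" and "finite I"
    and I: "\<And>c. c \<in> I \<Longrightarrow> 0 < c \<and> c < M \<and> (M - c + 2 * c) mod 3 = 0"
  shows "(\<Sum>c\<in>I. card (good_pairs B' (M - c) c)) \<le> card (FN B (M + 2 * degree B'))"
proof -
  let ?S = "SIGMA c:I. good_pairs B' (M - c) c"
  let ?D = "\<lambda>(c, Q1, Q2). (Q1 * B' + 1) * (Q2 * B' + 1)\<^sup>2"
  have "?D ` ?S \<subseteq> FN B (M + 2 * degree B')"
  proof clarify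
    fix c Q1 Q2 assume c: "c \<in> I" and Q: "(Q1, Q2) \<in> good_pairs B' (M - c) c"
    have "(Q1 * B' + 1) * (Q2 * B' + 1)\<^sup>2 \<in> FN B (M - c + c + 2 * degree B')"
      using I[OF c] by (intro good_pairs_mult_square_mem_FN[OF B' Q]) auto
    then show "(Q1 * B' + 1) * (Q2 * B' + 1)\<^sup>2 \<in> FN B (M + 2 * degree B')"
      using I[OF c] by simp
  qed
  moreover have "inj_on ?D ?S"
    by (rule inj_on_good_pairs_mult_square[OF B'(1)]) (use I in fastforce)
  ultimately have "card ?S \<le> card (FN B (M + 2 * degree B'))"
    by (intro card_inj_on_le) simp_all
  moreover have "card ?S = (\<Sum>c\<in>I. card (good_pairs B' (M - c) c))"
    using \<open>finite I\<close> by (intro card_SigmaI) auto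
  ultimately show ?thesis by simp
qed

lemma card_FN_ge:
  fixes B :: "'a::{field_gcd,finite} poly"
  assumes "B \<noteq> 0" and q: "7 \<le> CARD('a)" and N: "6 * degree B + 18 \<le> N"
  shows "(real N + 1) * real CARD('a) ^ N / (48 * real CARD('a) ^ (2 * degree B)) \<le> real (card (FN B N))"
proof -
  let ?q = "real CARD('a)" and ?b = "degree B"
  define B' where "B' = smult (inverse (lead_coeff B)) B"
  define M where "M = N - 2 * ?b"
  have B': "lead_coeff B' = 1" "degree B' = ?b" "B dvd B'"
    using \<open>B \<noteq> 0\<close> by (simp_all add: B'_def dvd_smult)
  obtain I where I: "finite I" "N + 1 \<le> 12 * card I"
    and deg: "\<And>c. c \<in> I \<Longrightarrow> ?b + 6 \<le> c \<and> ?b + 6 \<le> M - c \<and> (M - c + 2 * c) mod 3 = 0"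
    using admissible_degrees_exist[OF N] unfolding M_def by blast
  have "?q ^ N = ?q ^ M * ?q ^ (2 * ?b)"
    using N by (simp add: M_def flip: power_add)
  then have "(real N + 1) * ?q ^ N / (48 * ?q ^ (2 * ?b)) = (real N + 1) / 12 * (?q ^ M / 4)"
    by simp
  also have "\<dots> \<le> real (card I) * (?q ^ M / 4)"
    using of_nat_mono[OF I(2), where 'a=real] by (intro mult_right_mono) simp_all
  also have "\<dots> = (\<Sum>c\<in>I. ?q ^ M / 4)" by simp
  also have "\<dots> \<le> (\<Sum>c\<in>I. real (card (good_pairs B' (M - c) c)))"
  proof (rule sum_mono)
    fix c assume "c \<in> I"
    then have "M - c + c = M" using deg[of c] by arith
    then have "?q ^ (M - c) * ?q ^ c = ?q ^ M" by (metis power_add)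
    then show "?q ^ M / 4 \<le> real (card (good_pairs B' (M - c) c))"
      using card_good_pairs_ge[OF B'(1) q, of "M - c" c] deg[OF \<open>c \<in> I\<close>] B'(2) by simp
  qed
  also have "\<dots> \<le> real (card (FN B (M + 2 * degree B')))"
  proof -
    have "0 < c \<and> c < M \<and> (M - c + 2 * c) mod 3 = 0" if "c \<in> I" for c
      using deg[OF that] by (intro conjI) (simp_all, arith)
    from of_nat_mono[OF sum_card_good_pairs_le_card_FN[OF B'(1,3) I(1) this]] show ?thesis
      by simp
  qed
  also have "M + 2 * degree B' = N" using N B'(2) by (simp add: M_def)
  finally show ?thesis .
qed

lemma average_degree_Dk_le:
  fixes B :: "'a::{field_gcd,finite} poly"
  assumes "B \<noteq> 0" "7 \<le> CARD('a)"
  shows "1 / real (card (FN B N)) * (\<Sum>D\<in>FN B N. real (degree (Dk D k)))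
    \<le> max (real (6 * degree B + 18)) (96 * real CARD('a) ^ (2 * degree B))"
proof (cases "N < 6 * degree B + 18")
  case True
  have "(\<Sum>D\<in>FN B N. real (degree (Dk D k))) \<le> (\<Sum>D\<in>FN B N. real N)"
    by (rule sum_mono) (simp add: degree_Dk_le)
  then have "(\<Sum>D\<in>FN B N. real (degree (Dk D k))) \<le> real (card (FN B N)) * real N"
    by simp
  then have "1 / real (card (FN B N)) * (\<Sum>D\<in>FN B N. real (degree (Dk D k))) \<le> real N"
    by (cases "card (FN B N) = 0") (simp_all add: divide_le_eq mult.commute)
  with True show ?thesis by linarith
next
  case False
  let ?q = "real CARD('a)" and ?c = "real (card (FN B N))"
  have lower: "(real N + 1) * ?q ^ N / (48 * ?q ^ (2 * degree B)) \<le> ?c"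
    using False assms by (intro card_FN_ge) auto
  moreover have "0 < (real N + 1) * ?q ^ N / (48 * ?q ^ (2 * degree B))" by simp
  ultimately have "0 < ?c" by linarith
  have "(\<Sum>D\<in>FN B N. real (degree (Dk D k))) \<le> 2 * (real N + 1) * ?q ^ N"
    by (rule sum_degree_Dk_FN_le)
  also have "\<dots> = 96 * ?q ^ (2 * degree B) * ((real N + 1) * ?q ^ N / (48 * ?q ^ (2 * degree B)))"
    by simp
  also have "\<dots> \<le> 96 * ?q ^ (2 * degree B) * ?c"
    using lower by (intro mult_left_mono) auto
  finally have "1 / ?c * (\<Sum>D\<in>FN B N. real (degree (Dk D k))) \<le> 96 * ?q ^ (2 * degree B)"
    using \<open>0 < ?c\<close> by (simp add: field_simps)
  then show ?thesis by linarith
qed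

lemma card_ge_7_if_mod_6:
  assumes "CARD('a::{field,finite}) mod 6 = 1"
  shows "7 \<le> CARD('a)"
proof -
  have "card {0 :: 'a, 1} \<le> CARD('a)" by (rule card_mono) auto
  with assms show ?thesis by simp presburger
qed

theorem lemma2p7:
  fixes B :: "'a::{field_gcd,finite} poly" and p r :: nat
  assumes "prime p" and "p \<noteq> 2" and "p \<noteq> 3"
    and "CARD('a) = p ^ r" and "CARD('a) mod 6 = 1"
    and "minimal_weierstrass_j0 B"
  shows "\<exists>C::real. \<forall>N n::nat. n \<ge> 1 \<longrightarrow>
           (1 / real (card (FN B N))) *
             (\<Sum>D\<in>FN B N. real n * (\<Sum>d | d dvd n. real (degree (Dk D (n div d)))))
           \<le> C * real n * real (tau n)"
proof (intro exI allI impI)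
  define C where "C = max (real (6 * degree B + 18)) (96 * real CARD('a) ^ (2 * degree B))"
  have avg: "1 / real (card (FN B N)) * (\<Sum>D\<in>FN B N. real (degree (Dk D k))) \<le> C" for N k
    unfolding C_def using assms(5,6) card_ge_7_if_mod_6
    by (intro average_degree_Dk_le) (auto simp: minimal_weierstrass_j0_def)
  fix N n :: nat
  have "1 / real (card (FN B N)) * (\<Sum>D\<in>FN B N. real n * (\<Sum>d | d dvd n. real (degree (Dk D (n div d)))))
      = real n * (\<Sum>d | d dvd n. 1 / real (card (FN B N)) * (\<Sum>D\<in>FN B N. real (degree (Dk D (n div d)))))"
    by (simp add: sum_distrib_left sum.swap[of _ "FN B N"] algebra_simps)
  also have "\<dots> \<le> real n * (\<Sum>d | d dvd n. C)"
    using avg by (intro mult_left_mono sum_mono) auto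
  also have "\<dots> = C * real n * real (tau n)"
    by (simp add: tau_def)
  finally show "1 / real (card (FN B N)) * (\<Sum>D\<in>FN B N. real n * (\<Sum>d | d dvd n. real (degree (Dk D (n div d)))))
      \<le> C * real n * real (tau n)" .
qed

end
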